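(* In the directed variant of the greedy routing network creation game on any finite point set in any metric space, there is no best response cycle.
   Context: Let $\mathcal P$ be a finite set of $n\ge2$ points (agents) in a metric space with metric $d$. In the directed variant each agent $u$ chooses a strategy $S_u\subseteq\{(u,v):v\in\mathcal P\setminus\{u\}\}$ of directed edges, which it owns. A profile $\mathbf s=(S_u)_u$ induces the directed network $G(\mathbf s)=(\mathcal P,\bigcup_u S_u)$. A greedy routing path from $u$ to $w$ is a directed path $(x_1=u,\dots,x_j=w)$ in $G(\mathbf s)$ with $d(x_i,w)>d(x_{i+1},w)$ for all $i$; $u$ is greedy connected if it has a greedy routing path to every other agent. The cost of $u$ is $c_u(\mathbf s)=|S_u|$ if $u$ is greedy connected and $\infty$ otherwise. A best response of $u$ in $\mathbf s$ is a strategy minimizing $c_u(S'_u,\mathbf s_{-u})$ over all strategies $S'_u$. A best response path is a sequence of profiles $\mathbf s_0,\dots,\mathbf s_k$ where each $\mathbf s_i$ arises from $\mathbf s_{i-1}$ by one agent switching (from a non-best-response strategy) to a best response; a best response cycle is a best response path with $k\ge1$ and $\mathbf s_0=\mathbf s_k$. *)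

theory Defs
  imports Main "HOL-Library.Extended_Nat"
begin

definition is_metric_on :: "'a set \<Rightarrow> ('a \<Rightarrow> 'a \<Rightarrow> real) \<Rightarrow> bool" where
  "is_metric_on P d \<longleftrightarrow>
     (\<forall>x\<in>P. \<forall>y\<in>P. d x y \<ge> 0 \<and> (d x y = 0 \<longleftrightarrow> x = y) \<and> d x y = d y x) \<and>
     (\<forall>x\<in>P. \<forall>y\<in>P. \<forall>z\<in>P. d x z \<le> d x y + d y z)"

definition edges_of :: "'a set \<Rightarrow> 'a \<Rightarrow> ('a \<times> 'a) set" where
  "edges_of P u = (if u \<in> P then {(u, v) | v. v \<in> P \<and> v \<noteq> u} else {})"

definition profile :: "'a set \<Rightarrow> ('a \<Rightarrow> ('a \<times> 'a) set) \<Rightarrow> bool" where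
  "profile P s \<longleftrightarrow> (\<forall>u. s u \<subseteq> edges_of P u)"

definition network_edges :: "'a set \<Rightarrow> ('a \<Rightarrow> ('a \<times> 'a) set) \<Rightarrow> ('a \<times> 'a) set" where
  "network_edges P s = (\<Union>u\<in>P. s u)"

definition greedy_path ::
  "'a set \<Rightarrow> ('a \<Rightarrow> 'a \<Rightarrow> real) \<Rightarrow> ('a \<Rightarrow> ('a \<times> 'a) set) \<Rightarrow> 'a list \<Rightarrow> 'a \<Rightarrow> 'a \<Rightarrow> bool" where
  "greedy_path P d s xs u w \<longleftrightarrow>
     xs \<noteq> [] \<and> hd xs = u \<and> last xs = w \<and>
     (\<forall>i. Suc i < length xs \<longrightarrow>
        (xs ! i, xs ! Suc i) \<in> network_edges P s \<and> d (xs ! i) w > d (xs ! Suc i) w)"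

definition greedy_connected ::
  "'a set \<Rightarrow> ('a \<Rightarrow> 'a \<Rightarrow> real) \<Rightarrow> ('a \<Rightarrow> ('a \<times> 'a) set) \<Rightarrow> 'a \<Rightarrow> bool" where
  "greedy_connected P d s u \<longleftrightarrow> (\<forall>w\<in>P. w \<noteq> u \<longrightarrow> (\<exists>xs. greedy_path P d s xs u w))"

definition cost ::
  "'a set \<Rightarrow> ('a \<Rightarrow> 'a \<Rightarrow> real) \<Rightarrow> ('a \<Rightarrow> ('a \<times> 'a) set) \<Rightarrow> 'a \<Rightarrow> enat" where
  "cost P d s u = (if greedy_connected P d s u then enat (card (s u)) else \<infinity>)"

definition best_response ::
  "'a set \<Rightarrow> ('a \<Rightarrow> 'a \<Rightarrow> real) \<Rightarrow> ('a \<Rightarrow> ('a \<times> 'a) set) \<Rightarrow> 'a \<Rightarrow> ('a \<times> 'a) set \<Rightarrow> bool" where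
  "best_response P d s u S \<longleftrightarrow>
     S \<subseteq> edges_of P u \<and>
     (\<forall>S'. S' \<subseteq> edges_of P u \<longrightarrow> cost P d (s(u := S)) u \<le> cost P d (s(u := S')) u)"

definition br_step ::
  "'a set \<Rightarrow> ('a \<Rightarrow> 'a \<Rightarrow> real) \<Rightarrow> ('a \<Rightarrow> ('a \<times> 'a) set) \<Rightarrow> ('a \<Rightarrow> ('a \<times> 'a) set) \<Rightarrow> bool" where
  "br_step P d s s' \<longleftrightarrow>
     (\<exists>u\<in>P. \<exists>S. \<not> best_response P d s u (s u) \<and> best_response P d s u S \<and> s' = s(u := S))"

definition br_path ::
  "'a set \<Rightarrow> ('a \<Rightarrow> 'a \<Rightarrow> real) \<Rightarrow> ('a \<Rightarrow> ('a \<times> 'a) set) list \<Rightarrow> bool" where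
  "br_path P d ss \<longleftrightarrow> ss \<noteq> [] \<and> (\<forall>s\<in>set ss. profile P s) \<and>
     (\<forall>i. Suc i < length ss \<longrightarrow> br_step P d (ss ! i) (ss ! Suc i))"

definition br_cycle ::
  "'a set \<Rightarrow> ('a \<Rightarrow> 'a \<Rightarrow> real) \<Rightarrow> ('a \<Rightarrow> ('a \<times> 'a) set) list \<Rightarrow> bool" where
  "br_cycle P d ss \<longleftrightarrow> br_path P d ss \<and> length ss \<ge> 2 \<and> hd ss = last ss"

end

(*
  Let "v greedily reaches w" mean that G(s) contains a greedy routing path from v to w.
  This relation only grows along a best response path: after a best response the
  deviating agent u is greedy connected (buying all edges already gives finite cost),
  so a route that used an old edge of u can be continued from u by a new route, and
  all other edges stay. Along a cycle the relation is therefore constant.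
  On the other hand, whether u is greedy connected with a strategy S depends only on S
  and on the greedy reachability relation of the current profile, because a greedy route from u
  to w never comes back to u. So in every profile of the cycle u has the same best
  responses as in the first one. The first agent to deviate thus only ever holds a best
  response to the first profile afterwards, and when the cycle closes its original,
  non-best-response strategy would be one.
*)
theory Submission
  imports Defs
begin

inductive greedy_reach ::
  "'a set \<Rightarrow> ('a \<Rightarrow> 'a \<Rightarrow> real) \<Rightarrow> ('a \<Rightarrow> ('a \<times> 'a) set) \<Rightarrow> 'a \<Rightarrow> 'a \<Rightarrow> bool"
  for P d s where
  greedy_reach_refl: "greedy_reach P d s w w"
| greedy_reach_step: "(v, x) \<in> network_edges P s \<Longrightarrow> d x w < d v w \<Longrightarrow>
    greedy_reach P d s x w \<Longrightarrow> greedy_reach P d s v w"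

lemma greedy_path_singleton: "greedy_path P d s [x] u w \<longleftrightarrow> u = x \<and> w = x"
  by (auto simp: greedy_path_def)

lemma greedy_path_Cons_Cons:
  "greedy_path P d s (v # x # xs) u w \<longleftrightarrow>
     u = v \<and> (v, x) \<in> network_edges P s \<and> d x w < d v w \<and> greedy_path P d s (x # xs) x w"
  unfolding greedy_path_def by (auto simp: All_less_Suc2)

lemma greedy_path_imp_reach: "greedy_path P d s xs u w \<Longrightarrow> greedy_reach P d s u w"
proof (induction xs arbitrary: u rule: induct_list012)
  case 1
  then show ?case by (simp add: greedy_path_def)
next
  case (2 x)
  then show ?case by (simp add: greedy_path_singleton greedy_reach_refl)
next
  case (3 v x xs)
  then show ?case by (auto simp: greedy_path_Cons_Cons intro: greedy_reach_step)
qed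

lemma greedy_reach_imp_path: "greedy_reach P d s u w \<Longrightarrow> \<exists>xs. greedy_path P d s xs u w"
proof (induction rule: greedy_reach.induct)
  case (greedy_reach_refl w)
  have "greedy_path P d s [w] w w" by (simp add: greedy_path_singleton)
  then show ?case ..
next
  case (greedy_reach_step v x w)
  then obtain xs where "greedy_path P d s (x # xs) x w"
    by (metis greedy_path_def list.collapse)
  then have "greedy_path P d s (v # x # xs) v w"
    using greedy_reach_step.hyps by (simp add: greedy_path_Cons_Cons)
  then show ?case ..
qed

lemma greedy_connected_iff_reach:
  "greedy_connected P d s u \<longleftrightarrow> (\<forall>w\<in>P. w \<noteq> u \<longrightarrow> greedy_reach P d s u w)"
  unfolding greedy_connected_def using greedy_path_imp_reach greedy_reach_imp_path by metis

lemma network_edgesI: "v \<in> P \<Longrightarrow> (v, x) \<in> s v \<Longrightarrow> (v, x) \<in> network_edges P s"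
  by (auto simp: network_edges_def)

lemma network_edgesD:
  assumes "profile P s" "(v, x) \<in> network_edges P s"
  shows "v \<in> P" "x \<in> P" "(v, x) \<in> s v"
  using assms by (auto simp: network_edges_def profile_def edges_of_def split: if_splits)

lemma profile_fun_upd: "profile P s \<Longrightarrow> S \<subseteq> edges_of P u \<Longrightarrow> profile P (s(u := S))"
  by (auto simp: profile_def)

lemma greedy_reach_target_in:
  "greedy_reach P d s v w \<Longrightarrow> profile P s \<Longrightarrow> v \<in> P \<Longrightarrow> w \<in> P"
  by (induction rule: greedy_reach.induct) (auto dest: network_edgesD)

text \<open>Distances to w strictly decrease along a greedy route, so a route that starts
  closer to w than u never visits u.\<close>
lemma greedy_reach_fun_upd_farther:
  assumes "greedy_reach P d s v w" "profile P s" "d v w < d u w"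
  shows "greedy_reach P d (s(u := S)) v w"
  using assms
proof (induction rule: greedy_reach.induct)
  case (greedy_reach_refl w)
  show ?case by (rule greedy_reach.greedy_reach_refl)
next
  case (greedy_reach_step v x w)
  then have "v \<noteq> u" by auto
  moreover have "v \<in> P" "(v, x) \<in> s v"
    using network_edgesD[OF greedy_reach_step.prems(1) greedy_reach_step.hyps(1)] by simp_all
  ultimately have "(v, x) \<in> network_edges P (s(u := S))"
    by (simp add: network_edgesI)
  moreover have "greedy_reach P d (s(u := S)) x w"
    using greedy_reach_step.IH greedy_reach_step.prems greedy_reach_step.hyps(2)
    by (simp add: fun_upd_def)
  ultimately show ?case
    using greedy_reach_step.hyps(2) by (blast intro: greedy_reach.greedy_reach_step)
qed

lemma greedy_reach_deviation_iff:
  assumes "profile P s" "S \<subseteq> edges_of P u"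
  shows "greedy_reach P d (s(u := S)) u w \<longleftrightarrow>
           w = u \<or> (\<exists>x. (u, x) \<in> S \<and> d x w < d u w \<and> greedy_reach P d s x w)"
proof
  assume "greedy_reach P d (s(u := S)) u w"
  then show "w = u \<or> (\<exists>x. (u, x) \<in> S \<and> d x w < d u w \<and> greedy_reach P d s x w)"
  proof cases
    case (greedy_reach_step x)
    have "profile P (s(u := S))" using assms by (rule profile_fun_upd)
    then have "(u, x) \<in> S"
      using network_edgesD(3) greedy_reach_step(1) by fastforce
    moreover have "greedy_reach P d s x w"
      using greedy_reach_fun_upd_farther[OF greedy_reach_step(3) \<open>profile P (s(u := S))\<close>
          greedy_reach_step(2), where S = "s u"] by simp
    ultimately show ?thesis using greedy_reach_step(2) by blast
  qed simp
next
  assume "w = u \<or> (\<exists>x. (u, x) \<in> S \<and> d x w < d u w \<and> greedy_reach P d s x w)"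
  then show "greedy_reach P d (s(u := S)) u w"
  proof
    assume "\<exists>x. (u, x) \<in> S \<and> d x w < d u w \<and> greedy_reach P d s x w"
    then obtain x where x: "(u, x) \<in> S" "d x w < d u w" "greedy_reach P d s x w" by blast
    have "u \<in> P" using x(1) assms(2) by (auto simp: edges_of_def split: if_splits)
    then have "(u, x) \<in> network_edges P (s(u := S))"
      using x(1) by (simp add: network_edgesI)
    moreover have "greedy_reach P d (s(u := S)) x w"
      using x assms(1) by (simp add: greedy_reach_fun_upd_farther)
    ultimately show ?thesis
      using x(2) by (blast intro: greedy_reach_step)
  qed (simp add: greedy_reach_refl)
qed

lemma cost_deviation_cong:
  assumes "profile P s" "profile P t" "S \<subseteq> edges_of P u"
    and "greedy_reach P d s = greedy_reach P d t"
  shows "cost P d (s(u := S)) u = cost P d (t(u := S)) u"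
proof -
  have "greedy_reach P d (s(u := S)) u w \<longleftrightarrow> greedy_reach P d (t(u := S)) u w" for w
    using greedy_reach_deviation_iff[OF assms(1,3)] greedy_reach_deviation_iff[OF assms(2,3)] assms(4)
    by simp
  then have "greedy_connected P d (s(u := S)) u = greedy_connected P d (t(u := S)) u"
    unfolding greedy_connected_iff_reach by simp
  then show ?thesis by (simp add: cost_def)
qed

lemma best_response_cong:
  assumes "profile P s" "profile P t" "greedy_reach P d s = greedy_reach P d t"
  shows "best_response P d s u S \<longleftrightarrow> best_response P d t u S"
proof -
  have "cost P d (s(u := S')) u = cost P d (t(u := S')) u" if "S' \<subseteq> edges_of P u" for S'
    using cost_deviation_cong[OF assms(1,2) that assms(3)] .
  then show ?thesis by (simp add: best_response_def cong: conj_cong)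
qed

lemma greedy_connected_all_edges:
  assumes "is_metric_on P d" "u \<in> P"
  shows "greedy_connected P d (s(u := edges_of P u)) u"
  unfolding greedy_connected_iff_reach
proof (intro ballI impI)
  fix w assume w: "w \<in> P" "w \<noteq> u"
  have "(u, w) \<in> network_edges P (s(u := edges_of P u))"
    using w assms(2) by (intro network_edgesI) (auto simp: edges_of_def)
  moreover have "d w w < d u w"
    using assms w unfolding is_metric_on_def by (metis less_eq_real_def)
  ultimately show "greedy_reach P d (s(u := edges_of P u)) u w"
    by (blast intro: greedy_reach_step greedy_reach_refl)
qed

lemma best_response_greedy_connected:
  assumes "best_response P d s u S" "is_metric_on P d" "u \<in> P"
  shows "greedy_connected P d (s(u := S)) u"
proof -
  have "cost P d (s(u := S)) u \<le> cost P d (s(u := edges_of P u)) u"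
    using assms(1) by (simp add: best_response_def)
  also have "\<dots> < \<infinity>"
    using greedy_connected_all_edges[OF assms(2,3)] by (simp add: cost_def)
  finally show ?thesis by (simp add: cost_def split: if_splits)
qed

lemma br_step_greedy_reach_mono:
  assumes "br_step P d s s'" "profile P s" "is_metric_on P d" "greedy_reach P d s v w"
  shows "greedy_reach P d s' v w"
proof -
  obtain u S where u: "u \<in> P" "best_response P d s u S" "s' = s(u := S)"
    using assms(1) by (auto simp: br_step_def)
  have u_connected: "greedy_connected P d s' u"
    using best_response_greedy_connected[OF u(2) assms(3) u(1)] u(3) by simp
  show ?thesis
    using assms(4)
  proof (induction rule: greedy_reach.induct)
    case (greedy_reach_refl w)
    show ?case by (rule greedy_reach.greedy_reach_refl)
  next
    case (greedy_reach_step v x w)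
    show ?case
    proof (cases "v = u")
      case True
      have "x \<in> P"
        using network_edgesD(2)[OF assms(2) greedy_reach_step.hyps(1)] .
      then have "w \<in> P"
        using greedy_reach_target_in[OF greedy_reach_step.hyps(3) assms(2)] by simp
      show ?thesis
      proof (cases "w = u")
        case False
        with \<open>w \<in> P\<close> u_connected \<open>v = u\<close> show ?thesis
          unfolding greedy_connected_iff_reach by blast
      qed (simp add: \<open>v = u\<close> greedy_reach.greedy_reach_refl)
    next
      case False
      have "v \<in> P" "(v, x) \<in> s v"
        using network_edgesD[OF assms(2) greedy_reach_step.hyps(1)] by simp_all
      then have "(v, x) \<in> network_edges P s'"
        using False u(3) by (simp add: network_edgesI)
      then show ?thesis
        using greedy_reach_step.hyps(2) greedy_reach_step.IH
        by (blast intro: greedy_reach.greedy_reach_step)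
    qed
  qed
qed

lemma br_path_greedy_reach_mono:
  assumes "br_path P d ss" "is_metric_on P d" "i \<le> j" "j < length ss"
    and "greedy_reach P d (ss ! i) v w"
  shows "greedy_reach P d (ss ! j) v w"
  using assms(3,5)
proof (induction j rule: dec_induct)
  case (step k)
  have "Suc k < length ss" using step.hyps assms(4) by simp
  then have "br_step P d (ss ! k) (ss ! Suc k)" "profile P (ss ! k)"
    using assms(1) by (auto simp: br_path_def)
  moreover have "greedy_reach P d (ss ! k) v w"
    using step.IH step.prems .
  ultimately show ?case
    by (rule br_step_greedy_reach_mono[OF _ _ assms(2)])
qed simp

lemma br_cycle_greedy_reach_const:
  assumes "br_cycle P d ss" "is_metric_on P d" "i < length ss"
  shows "greedy_reach P d (ss ! i) = greedy_reach P d (hd ss)"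
proof -
  have path: "br_path P d ss" and "ss \<noteq> []" and "last ss = hd ss"
    using assms(1) by (simp_all add: br_cycle_def br_path_def)
  then have last_eq: "ss ! (length ss - 1) = hd ss"
    by (simp add: last_conv_nth)
  have "hd ss = ss ! 0"
    using \<open>ss \<noteq> []\<close> by (simp add: hd_conv_nth)
  show ?thesis
  proof (intro ext iffI)
    fix v w
    assume "greedy_reach P d (ss ! i) v w"
    then have "greedy_reach P d (ss ! (length ss - 1)) v w"
      using br_path_greedy_reach_mono[OF path assms(2), of i "length ss - 1"] assms(3) by simp
    then show "greedy_reach P d (hd ss) v w" using last_eq by simp
  next
    fix v w
    assume "greedy_reach P d (hd ss) v w"
    then show "greedy_reach P d (ss ! i) v w"
      using br_path_greedy_reach_mono[OF path assms(2), of 0 i] assms(3) \<open>hd ss = ss ! 0\<close> by simp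
  qed
qed

lemma br_cycle_best_response_persists:
  assumes "br_cycle P d ss" "is_metric_on P d"
    and "best_response P d (hd ss) u ((ss ! i) u)" "i \<le> j" "j < length ss"
  shows "best_response P d (hd ss) u ((ss ! j) u)"
  using assms(4,3)
proof (induction j rule: dec_induct)
  case (step k)
  have "Suc k < length ss" using step.hyps assms(5) by simp
  then have profiles: "profile P (ss ! k)" "profile P (hd ss)" and "br_step P d (ss ! k) (ss ! Suc k)"
    using assms(1) by (auto simp: br_cycle_def br_path_def)
  then obtain u' S where u': "best_response P d (ss ! k) u' S" "ss ! Suc k = (ss ! k)(u' := S)"
    by (auto simp: br_step_def)
  have "best_response P d (hd ss) u' S"
    using u'(1) best_response_cong[OF profiles br_cycle_greedy_reach_const[OF assms(1,2)]]
      \<open>Suc k < length ss\<close> by simp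
  moreover have "best_response P d (hd ss) u ((ss ! k) u)"
    using step.IH step.prems .
  ultimately show ?case
    using u'(2) by (cases "u' = u") simp_all
qed simp

theorem mainTheorem7:
  fixes P :: "'a set" and d :: "'a \<Rightarrow> 'a \<Rightarrow> real"
  assumes "finite P" and "card P \<ge> 2" and "is_metric_on P d"
  shows "\<not> (\<exists>ss. br_cycle P d ss)"
proof
  assume "\<exists>ss. br_cycle P d ss"
  then obtain ss where cycle: "br_cycle P d ss" ..
  then have "ss \<noteq> []" and len: "length ss \<ge> 2" and "last ss = hd ss"
    and "br_step P d (ss ! 0) (ss ! 1)"
    by (auto simp: br_cycle_def br_path_def)
  then have "br_step P d (hd ss) (ss ! 1)" and last_eq: "ss ! (length ss - 1) = hd ss"
    by (simp_all add: hd_conv_nth last_conv_nth)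
  then obtain u S where deviates: "\<not> best_response P d (hd ss) u (hd ss u)"
    and "best_response P d (hd ss) u S" "ss ! 1 = (hd ss)(u := S)"
    by (auto simp: br_step_def)
  then have "best_response P d (hd ss) u ((ss ! 1) u)" by simp
  moreover have "1 \<le> length ss - 1" "length ss - 1 < length ss"
    using len by simp_all
  ultimately have "best_response P d (hd ss) u ((ss ! (length ss - 1)) u)"
    by (rule br_cycle_best_response_persists[OF cycle assms(3)])
  with deviates last_eq show False by simp
qed

end
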